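(* Let $q\ge3$ be a prime power and let $\{P_i\}$ be an infinite family of toric codes over $\mathbb{F}_q$, with $P_i\subseteq[0,q-2]^{n_i}$. If there is $I$ such that $L(P_i)\le q-3$ for all $i\ge I$, then $R(P_i)\to0$ as $i\to\infty$.
   Context: For an integral convex polytope $P\subseteq[0,q-2]^n$, $R(P)=|P\cap\mathbb{Z}^n|/(q-1)^n$ and $\delta(P)=\big((q-1)^n-N(P)\big)/(q-1)^n$, where $N(P)$ is the maximum number of zeros in $(\mathbb{F}_q^\times)^n$ of a nonzero $\mathbb{F}_q$-linear combination of the monomials $x^p$, $p\in P\cap\mathbb{Z}^n$. A sequence of nonempty integral convex polytopes $P_i\subseteq[0,q-2]^{n_i}$ is an infinite family of toric codes if $n_i\to\infty$ and $\delta(P_i)$, $R(P_i)$ converge. The Minkowski length $\ell(P)$ is the largest number of summands in a decomposition of $P$ as a Minkowski sum of lattice polytopes of positive dimension ($\ell=0$ for a point); the full Minkowski length is $L(P)=\max\{\ell(Q):Q\subseteq P\text{ a lattice polytope}\}$. *)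

theory Defs
  imports "HOL-Analysis.Analysis"
begin

text \<open>Points of R^n are modelled as functions nat => real that vanish at coordinates >= n;
  integer points as functions nat => int vanishing at coordinates >= n.\<close>

definition int_pts :: "nat \<Rightarrow> (nat \<Rightarrow> int) set" where
  "int_pts n = {p. \<forall>i\<ge>n. p i = 0}"

definition rvec :: "(nat \<Rightarrow> int) \<Rightarrow> (nat \<Rightarrow> real)" where
  "rvec p = (\<lambda>i. real_of_int (p i))"

definition conv_hull :: "(nat \<Rightarrow> real) set \<Rightarrow> (nat \<Rightarrow> real) set" where
  "conv_hull V = {x. \<exists>c. (\<forall>v\<in>V. 0 \<le> c v) \<and> sum c V = 1 \<and>
                        x = (\<lambda>j. \<Sum>v\<in>V. c v * v j)}"

definition lattice_polytope :: "nat \<Rightarrow> (nat \<Rightarrow> real) set \<Rightarrow> bool" where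
  "lattice_polytope n P \<longleftrightarrow> (\<exists>V. finite V \<and> V \<noteq> {} \<and> V \<subseteq> int_pts n \<and> P = conv_hull (rvec ` V))"

definition lat_pts :: "nat \<Rightarrow> (nat \<Rightarrow> real) set \<Rightarrow> (nat \<Rightarrow> int) set" where
  "lat_pts n P = {p \<in> int_pts n. rvec p \<in> P}"

definition msum :: "(nat \<Rightarrow> real) set \<Rightarrow> (nat \<Rightarrow> real) set \<Rightarrow> (nat \<Rightarrow> real) set" where
  "msum A B = {(\<lambda>j. a j + b j) | a b. a \<in> A \<and> b \<in> B}"

fun msum_n :: "(nat \<Rightarrow> (nat \<Rightarrow> real) set) \<Rightarrow> nat \<Rightarrow> (nat \<Rightarrow> real) set" where
  "msum_n Q 0 = {(\<lambda>j. 0)}"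
| "msum_n Q (Suc k) = msum (msum_n Q k) (Q k)"

text \<open>The translate
  only matters for k = 0 (P a point, giving l = 0); for k >= 1 it can be absorbed in a summand.\<close>
definition mink_length :: "nat \<Rightarrow> (nat \<Rightarrow> real) set \<Rightarrow> nat" where
  "mink_length n P = Max {k. \<exists>Q t. t \<in> int_pts n \<and>
       (\<forall>j<k. lattice_polytope n (Q j) \<and> \<not> (\<exists>x. Q j = {x})) \<and>
       P = msum {rvec t} (msum_n Q k)}"

definition full_mink_length :: "nat \<Rightarrow> (nat \<Rightarrow> real) set \<Rightarrow> nat" where
  "full_mink_length n P = Max {mink_length n Q | Q. lattice_polytope n Q \<and> Q \<subseteq> P}"

definition toric_polytope :: "nat \<Rightarrow> nat \<Rightarrow> (nat \<Rightarrow> real) set \<Rightarrow> bool" where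
  "toric_polytope q n P \<longleftrightarrow> lattice_polytope n P \<and>
      (\<forall>x\<in>P. \<forall>i<n. 0 \<le> x i \<and> x i \<le> real q - 2)"

definition torus :: "nat \<Rightarrow> (nat \<Rightarrow> 'a::field) set" where
  "torus n = {x. (\<forall>i<n. x i \<noteq> 0) \<and> (\<forall>i\<ge>n. x i = 1)}"

definition monomial_eval :: "nat \<Rightarrow> (nat \<Rightarrow> int) \<Rightarrow> (nat \<Rightarrow> 'a::field) \<Rightarrow> 'a" where
  "monomial_eval n p x = (\<Prod>i<n. x i ^ nat (p i))"

text \<open>N(P): maximal number of zeros on the torus of a nonzero F_q-linear combination of the
  monomials x^p, p a lattice point of P.  The field F_q is the finite type 'a.\<close>
definition num_zeros :: "nat \<Rightarrow> ((nat \<Rightarrow> 'a::{finite,field}) \<Rightarrow> 'a) \<Rightarrow> nat" where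
  "num_zeros n f = card {x \<in> torus n. f x = 0}"

definition max_zeros :: "'a::{finite,field} itself \<Rightarrow> nat \<Rightarrow> (nat \<Rightarrow> real) set \<Rightarrow> nat" where
  "max_zeros T n P =
     Max {num_zeros n (\<lambda>x::nat \<Rightarrow> 'a. \<Sum>p\<in>lat_pts n P. c p * monomial_eval n p x)
          | c. (\<exists>p\<in>lat_pts n P. c p \<noteq> 0)}"

definition toric_rate :: "nat \<Rightarrow> nat \<Rightarrow> (nat \<Rightarrow> real) set \<Rightarrow> real" where
  "toric_rate q n P = real (card (lat_pts n P)) / (real q - 1) ^ n"

definition toric_delta :: "'a::{finite,field} itself \<Rightarrow> nat \<Rightarrow> (nat \<Rightarrow> real) set \<Rightarrow> real" where
  "toric_delta T n P = ((real CARD('a) - 1) ^ n - real (max_zeros T n P)) / (real CARD('a) - 1) ^ n"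

definition toric_family :: "'a::{finite,field} itself \<Rightarrow> (nat \<Rightarrow> nat) \<Rightarrow> (nat \<Rightarrow> (nat \<Rightarrow> real) set) \<Rightarrow> bool" where
  "toric_family T n P \<longleftrightarrow>
     (\<forall>i. toric_polytope CARD('a) (n i) (P i)) \<and>
     filterlim n at_top sequentially \<and>
     convergent (\<lambda>i. toric_delta T (n i) (P i)) \<and>
     convergent (\<lambda>i. toric_rate CARD('a) (n i) (P i))"

end

theory Submission
  imports Defs
begin

text \<open>If a toric polytope \<open>P \<subseteq> [0, q-2]\<^sup>n\<close> had more than \<open>(q-2)\<^sup>n\<close> lattice points, two of them,
  \<open>p\<close> and \<open>p'\<close>, would be congruent modulo \<open>q-2\<close>.  Then \<open>p' = p + (q-2) v\<close> with \<open>v\<close> a nonzero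
  lattice vector, and the segment \<open>[p, p'] \<subseteq> P\<close> is a translate of the Minkowski sum of \<open>q-2\<close>
  copies of \<open>[0, v]\<close>, so \<open>L(P) \<ge> q-2\<close>.  Hence \<open>L(P) \<le> q-3\<close> forces
  \<open>R(P) \<le> ((q-2)/(q-1))\<^sup>n\<close>, which tends to 0 as \<open>n \<rightarrow> \<infinity>\<close>.
  Since Minkowski lengths are defined through \<open>Max\<close>, one also needs that the numbers of summands
  in a box \<open>[0, c]\<^sup>n\<close> are bounded: every summand of positive dimension widens the sum by at
  least 1 in some coordinate.\<close>

lemma conv_hull_convex_comb:
  assumes "x \<in> conv_hull V" "y \<in> conv_hull V" "0 \<le> s" "s \<le> 1"
  shows "(\<lambda>j. (1 - s) * x j + s * y j) \<in> conv_hull V"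
proof -
  obtain c1 where c1: "\<forall>v\<in>V. 0 \<le> c1 v" "sum c1 V = 1" "x = (\<lambda>j. \<Sum>v\<in>V. c1 v * v j)"
    using assms(1) unfolding conv_hull_def by blast
  obtain c2 where c2: "\<forall>v\<in>V. 0 \<le> c2 v" "sum c2 V = 1" "y = (\<lambda>j. \<Sum>v\<in>V. c2 v * v j)"
    using assms(2) unfolding conv_hull_def by blast
  define c where "c = (\<lambda>v. (1 - s) * c1 v + s * c2 v)"
  have "\<forall>v\<in>V. 0 \<le> c v" using c1(1) c2(1) assms(3,4) unfolding c_def by simp
  moreover have "sum c V = 1" unfolding c_def
    by (simp add: sum.distrib flip: sum_distrib_left add: c1(2) c2(2))
  moreover have "(\<lambda>j. (1 - s) * x j + s * y j) = (\<lambda>j. \<Sum>v\<in>V. c v * v j)"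
    unfolding c_def c1(3) c2(3)
    by (rule ext) (simp add: sum_distrib_left sum.distrib distrib_right mult.assoc)
  ultimately show ?thesis unfolding conv_hull_def by blast
qed

lemma vertex_in_conv_hull:
  assumes "finite V" "v \<in> V"
  shows "v \<in> conv_hull V"
proof -
  define c where "c = (\<lambda>w. if w = v then (1::real) else 0)"
  have "v = (\<lambda>j. \<Sum>w\<in>V. c w * w j)"
  proof
    fix j
    have "(\<Sum>w\<in>V. c w * w j) = (\<Sum>w\<in>V. if w = v then v j else 0)"
      by (rule sum.cong) (auto simp: c_def)
    then show "v j = (\<Sum>w\<in>V. c w * w j)" using assms by simp
  qed
  moreover have "sum c V = 1" unfolding c_def using assms by simp
  moreover have "\<forall>w\<in>V. 0 \<le> c w" unfolding c_def by simp
  ultimately show ?thesis unfolding conv_hull_def by blast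
qed

lemma conv_hull_singleton: "conv_hull {z} = {z}"
  using vertex_in_conv_hull[of "{z}" z] unfolding conv_hull_def by auto

lemma conv_hull_pair:
  "conv_hull {a, b} = {(\<lambda>j. a j + s * (b j - a j)) | s. 0 \<le> s \<and> s \<le> 1}"
proof (cases "a = b")
  case True
  have "{(\<lambda>j. a j + s * (a j - a j)) | s. 0 \<le> s \<and> s \<le> (1::real)} = {a}" by auto
  then show ?thesis using True conv_hull_singleton by simp
next
  case False
  show ?thesis
  proof (intro equalityI subsetI)
    fix x assume "x \<in> conv_hull {a, b}"
    then obtain c where c: "0 \<le> c a" "0 \<le> c b" "c a + c b = 1"
        "x = (\<lambda>j. c a * a j + c b * b j)"
      unfolding conv_hull_def using False by auto
    have ca: "c a = 1 - c b" using c(3) by simp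
    have "x = (\<lambda>j. a j + c b * (b j - a j))"
      unfolding c(4) ca by (intro ext) (simp add: algebra_simps)
    then show "x \<in> {(\<lambda>j. a j + s * (b j - a j)) | s. 0 \<le> s \<and> s \<le> 1}" using c by auto
  next
    fix x assume "x \<in> {(\<lambda>j. a j + s * (b j - a j)) | s. 0 \<le> s \<and> s \<le> 1}"
    then obtain s where s: "0 \<le> s" "s \<le> 1" "x = (\<lambda>j. a j + s * (b j - a j))" by auto
    define c where "c = (\<lambda>w. if w = b then s else 1 - s)"
    have "x = (\<lambda>j. \<Sum>v\<in>{a, b}. c v * v j)"
      using False unfolding c_def s(3) by (intro ext) (simp add: algebra_simps)
    moreover have "\<forall>v\<in>{a, b}. 0 \<le> c v" "sum c {a, b} = 1"
      using s False unfolding c_def by auto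
    ultimately show "x \<in> conv_hull {a, b}" unfolding conv_hull_def by blast
  qed
qed

lemma conv_hull_pair_subset:
  assumes "a \<in> conv_hull V" "b \<in> conv_hull V"
  shows "conv_hull {a, b} \<subseteq> conv_hull V"
proof
  fix x assume "x \<in> conv_hull {a, b}"
  then obtain s where s: "0 \<le> s" "s \<le> 1" "x = (\<lambda>j. a j + s * (b j - a j))"
    unfolding conv_hull_pair by blast
  have "x = (\<lambda>j. (1 - s) * a j + s * b j)" unfolding s(3) by (rule ext) (simp add: algebra_simps)
  then show "x \<in> conv_hull V" using conv_hull_convex_comb[OF assms s(1,2)] by simp
qed

lemma conv_hull_lat_pts_subset:
  assumes "toric_polytope q d P" "p \<in> lat_pts d P" "p' \<in> lat_pts d P"
  shows "conv_hull {rvec p, rvec p'} \<subseteq> P"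
proof -
  obtain V where "P = conv_hull V"
    using assms(1) unfolding toric_polytope_def lattice_polytope_def by blast
  then show ?thesis using conv_hull_pair_subset assms(2,3) unfolding lat_pts_def by blast
qed

lemma msum_singleton: "msum {a} T = {(\<lambda>j. a j + x j) | x. x \<in> T}"
  unfolding msum_def by auto

lemma msumI: "x \<in> A \<Longrightarrow> y \<in> B \<Longrightarrow> (\<lambda>j. x j + y j) \<in> msum A B"
  unfolding msum_def by blast

lemma msum_n_segment:
  "msum_n (\<lambda>_. {(\<lambda>j. s * w j) | s. 0 \<le> s \<and> s \<le> 1}) k
     = {(\<lambda>j. s * w j) | s. 0 \<le> s \<and> s \<le> real k}"
proof (induction k)
  case 0
  show ?case by (auto intro: exI[of _ 0])
next
  case (Suc k)
  have "msum {(\<lambda>j. s * w j) | s. 0 \<le> s \<and> s \<le> real k} {(\<lambda>j. s * w j) | s. 0 \<le> s \<and> s \<le> 1}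
      = {(\<lambda>j. s * w j) | s. 0 \<le> s \<and> s \<le> real (Suc k)}" (is "?L = ?R")
  proof (intro equalityI subsetI)
    fix x assume "x \<in> ?L"
    then obtain s r where sr: "0 \<le> s" "s \<le> real k" "0 \<le> r" "r \<le> 1"
      "x = (\<lambda>j. s * w j + r * w j)" unfolding msum_def by blast
    then have "x = (\<lambda>j. (s + r) * w j)" by (simp add: algebra_simps)
    then show "x \<in> ?R" using sr by auto
  next
    fix x assume "x \<in> ?R"
    then obtain s where s: "0 \<le> s" "s \<le> real k + 1" "x = (\<lambda>j. s * w j)" by auto
    define s1 where "s1 = min s (real k)"
    have "0 \<le> s1" "s1 \<le> real k" "0 \<le> s - s1" "s - s1 \<le> 1"
      using s unfolding s1_def by auto
    then have "(\<lambda>j. s1 * w j + (s - s1) * w j) \<in> ?L" by (intro msumI) auto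
    moreover have "x = (\<lambda>j. s1 * w j + (s - s1) * w j)" using s by (simp add: algebra_simps)
    ultimately show "x \<in> ?L" by simp
  qed
  then show ?case using Suc by simp
qed

lemma lattice_polytope_not_singleton_width:
  assumes "lattice_polytope d A" "\<nexists>x. A = {x}"
  shows "\<exists>a\<in>A. \<exists>b\<in>A. \<exists>i<d. 1 \<le> a i - b i"
proof -
  obtain V where V: "finite V" "V \<noteq> {}" "V \<subseteq> int_pts d" "A = conv_hull (rvec ` V)"
    using assms(1) unfolding lattice_polytope_def by blast
  obtain u where u: "u \<in> V" using V(2) by blast
  have "V \<noteq> {u}" using V(4) assms(2) by (auto simp: conv_hull_singleton)
  then obtain w where w: "w \<in> V" "u \<noteq> w" using u by blast
  note uw = u w
  then obtain i where i: "u i \<noteq> w i" by (metis fun_eq_iff)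
  have "i < d"
  proof (rule ccontr)
    assume "\<not> i < d"
    then have "u i = 0" "w i = 0" using uw V(3) unfolding int_pts_def by auto
    then show False using i by simp
  qed
  moreover have "rvec u \<in> A" "rvec w \<in> A"
    using vertex_in_conv_hull[of "rvec ` V"] V(1,4) uw by simp_all
  moreover have "1 \<le> rvec u i - rvec w i \<or> 1 \<le> rvec w i - rvec u i"
    using i unfolding rvec_def by linarith
  ultimately show ?thesis by blast
qed

lemma msum_n_width:
  assumes "\<forall>j<k. lattice_polytope d (Q j) \<and> (\<nexists>x. Q j = {x})"
  shows "\<exists>f::nat \<Rightarrow> nat. (\<Sum>i<d. f i) = k \<and>
     (\<forall>i<d. \<exists>x\<in>msum_n Q k. \<exists>y\<in>msum_n Q k. real (f i) \<le> x i - y i)"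
  using assms
proof (induction k)
  case 0
  show ?case by (rule exI[of _ "\<lambda>_. 0"]) auto
next
  case (Suc k)
  then obtain f where f: "(\<Sum>i<d. f i) = k"
     "\<forall>i<d. \<exists>x\<in>msum_n Q k. \<exists>y\<in>msum_n Q k. real (f i) \<le> x i - y i" by auto
  obtain a b i0 where ab: "a \<in> Q k" "b \<in> Q k" "i0 < d" "1 \<le> a i0 - b i0"
    using lattice_polytope_not_singleton_width Suc.prems by blast
  define g where "g = f(i0 := Suc (f i0))"
  have "(\<Sum>i<d. g i) = (\<Sum>i<d. f i + (if i = i0 then 1 else 0))"
    unfolding g_def by (rule sum.cong) auto
  then have "(\<Sum>i<d. g i) = Suc k" using ab(3) f(1) by (simp add: sum.distrib)
  moreover have "\<exists>x\<in>msum_n Q (Suc k). \<exists>y\<in>msum_n Q (Suc k). real (g i) \<le> x i - y i"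
    if "i < d" for i
  proof -
    obtain x y where xy: "x \<in> msum_n Q k" "y \<in> msum_n Q k" "real (f i) \<le> x i - y i"
      using f(2) \<open>i < d\<close> by blast
    define y' where "y' = (if i = i0 then b else a)"
    have "(\<lambda>j. x j + a j) \<in> msum_n Q (Suc k)" "(\<lambda>j. y j + y' j) \<in> msum_n Q (Suc k)"
      using xy ab unfolding y'_def by (auto intro: msumI)
    moreover have "real (g i) \<le> (x i + a i) - (y i + y' i)"
      using xy(3) ab(4) unfolding g_def y'_def by auto
    ultimately show ?thesis
      by (intro bexI[of _ "\<lambda>j. x j + a j"] bexI[of _ "\<lambda>j. y j + y' j"]) auto
  qed
  ultimately show ?case by blast
qed

lemma mink_summands_le_box:
  assumes "\<forall>j<k. lattice_polytope d (Q j) \<and> (\<nexists>x. Q j = {x})"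
    and "\<forall>x\<in>msum {t} (msum_n Q k). \<forall>i<d. 0 \<le> x i \<and> x i \<le> c"
  shows "real k \<le> real d * c"
proof -
  obtain f where f: "(\<Sum>i<d. f i) = k"
     "\<forall>i<d. \<exists>x\<in>msum_n Q k. \<exists>y\<in>msum_n Q k. real (f i) \<le> x i - y i"
    using msum_n_width[OF assms(1)] by blast
  have "real (f i) \<le> c" if "i < d" for i
  proof -
    obtain x y where xy: "x \<in> msum_n Q k" "y \<in> msum_n Q k" "real (f i) \<le> x i - y i"
      using f(2) \<open>i < d\<close> by blast
    have "t i + x i \<le> c" "0 \<le> t i + y i"
      using bspec[OF assms(2) msumI[OF singletonI xy(1)]] bspec[OF assms(2) msumI[OF singletonI xy(2)]]
        \<open>i < d\<close> by simp_all
    then show ?thesis using xy(3) by simp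
  qed
  then have "(\<Sum>i<d. real (f i)) \<le> (\<Sum>i<d. c)" by (intro sum_mono) simp
  moreover have "real k = (\<Sum>i<d. real (f i))" using f(1) by (metis of_nat_sum)
  ultimately show ?thesis by simp
qed

definition mink_decomp_counts :: "nat \<Rightarrow> (nat \<Rightarrow> real) set \<Rightarrow> nat set" where
  "mink_decomp_counts n P = {k. \<exists>Q t. t \<in> int_pts n \<and>
       (\<forall>j<k. lattice_polytope n (Q j) \<and> (\<nexists>x. Q j = {x})) \<and>
       P = msum {rvec t} (msum_n Q k)}"

lemma mink_length_eq_Max: "mink_length n P = Max (mink_decomp_counts n P)"
  unfolding mink_length_def mink_decomp_counts_def by simp

lemma mink_decomp_counts_subset_atMost:
  assumes "toric_polytope q d P" "Q \<subseteq> P" "q \<ge> 2"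
  shows "mink_decomp_counts d Q \<subseteq> {..d * (q - 2)}"
proof
  fix k assume "k \<in> mink_decomp_counts d Q"
  then obtain R t where Rt: "\<forall>j<k. lattice_polytope d (R j) \<and> (\<nexists>x. R j = {x})"
      "Q = msum {rvec t} (msum_n R k)"
    unfolding mink_decomp_counts_def by blast
  have "\<forall>x\<in>msum {rvec t} (msum_n R k). \<forall>i<d. 0 \<le> x i \<and> x i \<le> real q - 2"
    using assms(1,2) Rt(2) unfolding toric_polytope_def by blast
  then have "real k \<le> real d * (real q - 2)" using mink_summands_le_box[OF Rt(1)] by blast
  also have "\<dots> = real (d * (q - 2))" using assms(3) by (simp add: of_nat_diff)
  finally show "k \<in> {..d * (q - 2)}" by (simp only: of_nat_le_iff atMost_iff)
qed

lemma mink_decomp_counts_le_mink_length: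
  assumes "toric_polytope q d P" "Q \<subseteq> P" "q \<ge> 2" "m \<in> mink_decomp_counts d Q"
  shows "m \<le> mink_length d Q"
proof -
  have "finite (mink_decomp_counts d Q)"
    using mink_decomp_counts_subset_atMost[OF assms(1-3)] finite_subset by blast
  then show ?thesis unfolding mink_length_eq_Max using assms(4) by (rule Max_ge)
qed

lemma mink_length_le_full_mink_length:
  assumes "toric_polytope q d P" "q \<ge> 2" "lattice_polytope d Q" "Q \<subseteq> P"
  shows "mink_length d Q \<le> full_mink_length d P"
proof -
  have "mink_length d R \<in> Max ` Pow {..d * (q - 2)}" if "R \<subseteq> P" for R
    unfolding mink_length_eq_Max
    using mink_decomp_counts_subset_atMost[OF assms(1) that assms(2)] by (intro imageI PowI)
  then have "{mink_length d Q | Q. lattice_polytope d Q \<and> Q \<subseteq> P} \<subseteq> Max ` Pow {..d * (q - 2)}"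
    by blast
  then have "finite {mink_length d Q | Q. lattice_polytope d Q \<and> Q \<subseteq> P}"
    by (rule finite_subset) simp
  then show ?thesis unfolding full_mink_length_def by (rule Max_ge) (use assms(3,4) in blast)
qed

lemma segment_rescale:
  assumes "0 < c"
  shows "{(\<lambda>j. a j + s * (c * w j)) | s. 0 \<le> s \<and> s \<le> 1}
       = {(\<lambda>j. a j + s * w j) | s::real. 0 \<le> s \<and> s \<le> c}"
proof (intro equalityI subsetI)
  fix x assume "x \<in> {(\<lambda>j. a j + s * (c * w j)) | s. 0 \<le> s \<and> s \<le> 1}"
  then obtain s where s: "0 \<le> s" "s \<le> 1" "x = (\<lambda>j. a j + (s * c) * w j)"
    by (auto simp: mult.assoc)
  moreover have "s * c \<le> c" using s assms by (simp add: mult_le_cancel_right1)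
  ultimately show "x \<in> {(\<lambda>j. a j + s * w j) | s::real. 0 \<le> s \<and> s \<le> c}"
    using assms by auto
next
  fix x assume "x \<in> {(\<lambda>j. a j + s * w j) | s::real. 0 \<le> s \<and> s \<le> c}"
  then obtain s where s: "0 \<le> s" "s \<le> c" "x = (\<lambda>j. a j + s * w j)" by auto
  then have "x = (\<lambda>j. a j + (s / c) * (c * w j))" using assms by simp
  moreover have "0 \<le> s / c" "s / c \<le> 1" using s assms by auto
  ultimately show "x \<in> {(\<lambda>j. a j + s * (c * w j)) | s. 0 \<le> s \<and> s \<le> 1}" by blast
qed

lemma lattice_segment_mink_decomp:
  assumes "p \<in> int_pts d" "v \<in> int_pts d" "v \<noteq> (\<lambda>_. 0)" "0 < m"
  shows "m \<in> mink_decomp_counts d (conv_hull {rvec p, rvec (\<lambda>j. p j + int m * v j)})"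
proof -
  define S where "S = conv_hull (rvec ` {\<lambda>_. 0, v})"
  have S_eq: "S = {(\<lambda>j. s * rvec v j) | s. 0 \<le> s \<and> s \<le> 1}"
    unfolding S_def by (simp add: conv_hull_pair rvec_def)
  have "lattice_polytope d S"
    unfolding lattice_polytope_def S_def using assms(2)
    by (intro exI[of _ "{\<lambda>_. 0, v}"]) (simp add: int_pts_def)
  moreover have "\<nexists>x. S = {x}"
  proof
    assume "\<exists>x. S = {x}"
    moreover have "(\<lambda>j. s * rvec v j) \<in> S" if "0 \<le> s" "s \<le> 1" for s
      unfolding S_eq using that by blast
    ultimately have "(\<lambda>j. 0 * rvec v j) = (\<lambda>j. 1 * rvec v j)"
      by (metis order.refl zero_le_one singletonD)
    then have "rvec v = (\<lambda>_. 0)" by simp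
    then show False using assms(3) by (auto simp: rvec_def fun_eq_iff)
  qed
  moreover have
    "conv_hull {rvec p, rvec (\<lambda>j. p j + int m * v j)} = msum {rvec p} (msum_n (\<lambda>_. S) m)"
  proof -
    have "conv_hull {rvec p, rvec (\<lambda>j. p j + int m * v j)}
        = {(\<lambda>j. rvec p j + s * (real m * rvec v j)) | s. 0 \<le> s \<and> s \<le> 1}"
      by (simp add: conv_hull_pair rvec_def)
    also have "\<dots> = {(\<lambda>j. rvec p j + s * rvec v j) | s. 0 \<le> s \<and> s \<le> real m}"
      using assms(4) by (intro segment_rescale) simp
    also have "\<dots> = msum {rvec p} (msum_n (\<lambda>_. S) m)"
      unfolding S_eq msum_n_segment msum_singleton by auto
    finally show ?thesis .
  qed
  ultimately show ?thesis
    unfolding mink_decomp_counts_def using assms(1)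
    by (intro CollectI exI[of _ "\<lambda>_. S"] exI[of _ p]) simp
qed

lemma congruent_lat_pts_le_full_mink_length:
  assumes "toric_polytope q d P" "q \<ge> 2" "p \<in> lat_pts d P" "p' \<in> lat_pts d P" "p \<noteq> p'"
    and "0 < m" "\<And>j. int m dvd p' j - p j"
  shows "m \<le> full_mink_length d P"
proof -
  define v where "v j = (p' j - p j) div int m" for j
  have p': "p' = (\<lambda>j. p j + int m * v j)"
    using assms(7) unfolding v_def by (simp add: fun_eq_iff)
  have "p \<in> int_pts d" "p' \<in> int_pts d" using assms(3,4) unfolding lat_pts_def by auto
  then have "v \<in> int_pts d" unfolding int_pts_def v_def by simp
  moreover have "v \<noteq> (\<lambda>_. 0)" using assms(5) p' by auto
  ultimately have "m \<in> mink_decomp_counts d (conv_hull {rvec p, rvec p'})"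
    using lattice_segment_mink_decomp \<open>p \<in> int_pts d\<close> assms(6) p' by blast
  moreover have seg: "conv_hull {rvec p, rvec p'} \<subseteq> P"
    using conv_hull_lat_pts_subset assms(1,3,4) by blast
  ultimately have "m \<le> mink_length d (conv_hull {rvec p, rvec p'})"
    using mink_decomp_counts_le_mink_length assms(1,2) by blast
  also have "\<dots> \<le> full_mink_length d P"
  proof (rule mink_length_le_full_mink_length[OF assms(1,2) _ seg])
    show "lattice_polytope d (conv_hull {rvec p, rvec p'})"
      unfolding lattice_polytope_def using \<open>p \<in> int_pts d\<close> \<open>p' \<in> int_pts d\<close>
      by (intro exI[of _ "{p, p'}"]) simp
  qed
  finally show ?thesis .
qed

lemma card_int_pts_le_if_incongruent:
  assumes "S \<subseteq> int_pts d" "0 < m"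
    and "\<And>p p'. p \<in> S \<Longrightarrow> p' \<in> S \<Longrightarrow> (\<forall>j. p j mod int m = p' j mod int m) \<Longrightarrow> p = p'"
  shows "card S \<le> m ^ d"
proof -
  define residues where "residues p = restrict (\<lambda>j. p j mod int m) {..<d}" for p :: "nat \<Rightarrow> int"
  have "inj_on residues S"
  proof (rule inj_onI)
    fix p p' assume pp': "p \<in> S" "p' \<in> S" "residues p = residues p'"
    have "p j mod int m = p' j mod int m" for j
    proof (cases "j < d")
      case True
      then show ?thesis using fun_cong[OF pp'(3), of j] unfolding residues_def by simp
    next
      case False
      then have "p j = 0" "p' j = 0" using pp'(1,2) assms(1) unfolding int_pts_def by auto
      then show ?thesis by simp
    qed
    then show "p = p'" using assms(3) pp'(1,2) by blast
  qed
  moreover have "residues ` S \<subseteq> PiE {..<d} (\<lambda>_. {0..<int m})"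
    unfolding residues_def using assms(2)
    by (intro image_subsetI restrict_PiE_iff[THEN iffD2]) simp
  ultimately have "card S \<le> card (PiE {..<d} (\<lambda>_. {0..<int m}))"
    by (intro card_inj_on_le) (auto simp: finite_PiE)
  then show ?thesis by (simp add: card_PiE)
qed

lemma card_lat_pts_toric_le:
  assumes "toric_polytope q d P" "q \<ge> 3" "full_mink_length d P < q - 2"
  shows "card (lat_pts d P) \<le> (q - 2) ^ d"
proof (rule card_int_pts_le_if_incongruent)
  fix p p' assume pp': "p \<in> lat_pts d P" "p' \<in> lat_pts d P"
    and "\<forall>j. p j mod int (q - 2) = p' j mod int (q - 2)"
  then have dvd: "int (q - 2) dvd p' j - p j" for j by (metis mod_eq_dvd_iff)
  show "p = p'"
  proof (rule ccontr)
    assume "p \<noteq> p'"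
    then have "q - 2 \<le> full_mink_length d P"
      using congruent_lat_pts_le_full_mink_length[OF assms(1) _ pp' _ _ dvd] assms(2) by simp
    then show False using assms(3) by simp
  qed
qed (use assms(2) in \<open>auto simp: lat_pts_def\<close>)

lemma toric_rate_le:
  assumes "toric_polytope q d P" "q \<ge> 3" "full_mink_length d P < q - 2"
  shows "toric_rate q d P \<le> ((real q - 2) / (real q - 1)) ^ d"
proof -
  have "real (card (lat_pts d P)) \<le> real ((q - 2) ^ d)"
    using card_lat_pts_toric_le[OF assms] by (simp only: of_nat_le_iff)
  also have "\<dots> = (real q - 2) ^ d" using assms(2) by (simp add: of_nat_diff)
  finally have "real (card (lat_pts d P)) \<le> (real q - 2) ^ d" .
  moreover have "0 < (real q - 1) ^ d" using assms(2) by simp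
  ultimately show ?thesis
    unfolding toric_rate_def power_divide by (rule divide_right_mono[OF _ less_imp_le])
qed

theorem mainTheorem15:
  fixes n :: "nat \<Rightarrow> nat" and P :: "nat \<Rightarrow> (nat \<Rightarrow> real) set"
  assumes "CARD('a::{finite,field}) \<ge> 3"
    and "toric_family TYPE('a) n P"
    and "\<exists>I. \<forall>i\<ge>I. full_mink_length (n i) (P i) \<le> CARD('a) - 3"
  shows "(\<lambda>i. toric_rate CARD('a) (n i) (P i)) \<longlonglongrightarrow> 0"
proof -
  let ?q = "CARD('a)"
  define r where "r = (real ?q - 2) / (real ?q - 1)"
  obtain I where I: "\<forall>i\<ge>I. full_mink_length (n i) (P i) \<le> ?q - 3" using assms(3) by blast
  have tp: "\<And>i. toric_polytope ?q (n i) (P i)" and n: "filterlim n at_top sequentially"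
    using assms(2) unfolding toric_family_def by auto
  have "norm r < 1" using assms(1) unfolding r_def by simp
  from filterlim_compose[OF LIMSEQ_power_zero[OF this] n]
  have lim: "(\<lambda>i. r ^ n i) \<longlonglongrightarrow> 0" by (simp add: o_def)
  have le: "\<forall>\<^sub>F i in sequentially. toric_rate ?q (n i) (P i) \<le> r ^ n i"
  proof (rule eventually_sequentiallyI)
    fix i assume "I \<le> i"
    then have "full_mink_length (n i) (P i) < ?q - 2" using I assms(1) by fastforce
    then show "toric_rate ?q (n i) (P i) \<le> r ^ n i"
      unfolding r_def by (rule toric_rate_le[OF tp assms(1)])
  qed
  have ge: "\<forall>\<^sub>F i in sequentially. 0 \<le> toric_rate ?q (n i) (P i)"
    unfolding toric_rate_def using assms(1) by simp
  show ?thesis by (rule tendsto_sandwich[OF ge le tendsto_const lim])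
qed

end
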